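(* Let $a\ge a_0$. If $(DFE_a)$ admits a solution on $\mathbf V$, then $a=c$.
   Context: Setting: network $\Gamma$ with arcs $\mathcal E$ (finite, closed under inversion $\tilde\gamma(s)=\gamma(1-s)$, disjoint interiors except $\gamma,\tilde\gamma$, vertices $\mathbf V$, connected), Hamiltonians $H_\gamma$ continuous, coercive, quasiconvex in $p$ with $\mathrm{Int}\{H_\gamma(s,\cdot)\le b\}=\{H_\gamma(s,\cdot)<b\}$, $H_{\tilde\gamma}(s,p)=H_\gamma(1-s,-p)$. $a_\gamma=\max_s\min_pH_\gamma$, $c_\gamma$ = least $a$ for which $H_\gamma(s,u')=a$ has a periodic ($u(0)=u(1)$) viscosity subsolution in $(0,1)$, $a_0=\max\{\max_{\gamma\text{ not closed}}a_\gamma,\max_{\gamma\text{ closed}}c_\gamma\}$, and $s\mapsto\min_pH_\gamma(s,p)$ is constant whenever $a_\gamma=a_0$. $\sigma^+_{a,\gamma}(s)=\max\{p:H_\gamma(s,p)=a\}$. Abstract graph $\mathbf X=(\mathbf V,\mathbf E)$ with bijection $\Psi:\mathbf E\to\mathcal E$, $\mathrm o(e)=\Psi(e)(0)$, $\mathrm t(e)=\Psi(e)(1)$, $-e=\Psi^{-1}(\widetilde{\Psi(e)})$, $\mathbf E_x=\{e:\mathrm o(e)=x\}$; for $a\ge a_0$, $\sigma_a(e)=\int_0^1\sigma^+_{a,\Psi(e)}$. $(DFE_a)$: $u(x)=\min_{e\in\mathbf E_x}(u(\mathrm t(e))+\sigma_a(-e))$, $x\in\mathbf V$; subsolution: $u(\mathrm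 t(e))-u(\mathrm o(e))\le\sigma_a(e)$ for all $e$. Critical value: $c=\min\{a\ge a_0:(DFE_a)$ admits a subsolution$\}$ (the minimum exists). *)

theory Defs
  imports "HOL-Analysis.Analysis"
begin

text \<open>Arcs are maps real => 'a (only their values on [0,1] matter); the
  network is a finite set of arcs.  The abstract graph X is taken with
  edge set equal to the set of arcs (Psi = identity), origin o(e) = e 0,
  terminal t(e) = e 1, and -e = reversed arc.\<close>

definition rev_arc :: "(real \<Rightarrow> 'a) \<Rightarrow> (real \<Rightarrow> 'a)" where
  "rev_arc \<gamma> = (\<lambda>s. \<gamma> (1 - s))"

definition vertices :: "(real \<Rightarrow> 'a) set \<Rightarrow> 'a set" where
  "vertices \<E> = {\<gamma> 0 | \<gamma>. \<gamma> \<in> \<E>} \<union> {\<gamma> 1 | \<gamma>. \<gamma> \<in> \<E>}"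

definition network :: "(real \<Rightarrow> 'a::euclidean_space) set \<Rightarrow> bool" where
  "network \<E> \<longleftrightarrow>
     finite \<E> \<and> \<E> \<noteq> {} \<and>
     (\<forall>\<gamma>\<in>\<E>. rev_arc \<gamma> \<in> \<E>) \<and>
     (\<forall>\<gamma>\<in>\<E>. continuous_on {0..1} \<gamma> \<and> inj_on \<gamma> {0..<1} \<and> inj_on \<gamma> {0<..1}) \<and>
     (\<forall>\<gamma>\<in>\<E>. \<forall>\<delta>\<in>\<E>. \<delta> \<noteq> \<gamma> \<and> \<delta> \<noteq> rev_arc \<gamma> \<longrightarrow>
         \<gamma> ` {0<..<1} \<inter> \<delta> ` {0<..<1} = {}) \<and>
     connected (\<Union>\<gamma>\<in>\<E>. \<gamma> ` {0..1})"

definition hamiltonians ::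
  "(real \<Rightarrow> 'a) set \<Rightarrow> ((real \<Rightarrow> 'a) \<Rightarrow> real \<Rightarrow> real \<Rightarrow> real) \<Rightarrow> bool" where
  "hamiltonians \<E> H \<longleftrightarrow>
     (\<forall>\<gamma>\<in>\<E>.
        continuous_on ({0..1} \<times> UNIV) (\<lambda>(s,p). H \<gamma> s p) \<and>
        (\<forall>M. \<exists>R. \<forall>s\<in>{0..1}. \<forall>p. \<bar>p\<bar> \<ge> R \<longrightarrow> H \<gamma> s p \<ge> M) \<and>
        (\<forall>s\<in>{0..1}. \<forall>b. convex {p. H \<gamma> s p \<le> b}) \<and>
        (\<forall>s\<in>{0..1}. \<forall>b. interior {p. H \<gamma> s p \<le> b} = {p. H \<gamma> s p < b}) \<and>
        (\<forall>s\<in>{0..1}. \<forall>p. H (rev_arc \<gamma>) s p = H \<gamma> (1 - s) (- p)))"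

definition minH :: "((real \<Rightarrow> 'a) \<Rightarrow> real \<Rightarrow> real \<Rightarrow> real) \<Rightarrow> (real \<Rightarrow> 'a) \<Rightarrow> real \<Rightarrow> real" where
  "minH H \<gamma> s = (INF p. H \<gamma> s p)"

definition a_arc :: "((real \<Rightarrow> 'a) \<Rightarrow> real \<Rightarrow> real \<Rightarrow> real) \<Rightarrow> (real \<Rightarrow> 'a) \<Rightarrow> real" where
  "a_arc H \<gamma> = (SUP s\<in>{0..1}. minH H \<gamma> s)"

definition visc_subsol :: "(real \<Rightarrow> real \<Rightarrow> real) \<Rightarrow> real \<Rightarrow> (real \<Rightarrow> real) \<Rightarrow> bool" where
  "visc_subsol h a u \<longleftrightarrow>
     continuous_on {0..1} u \<and>
     (\<forall>s\<in>{0<..<1}. \<forall>\<phi> \<phi>'.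
        (\<forall>x. (\<phi> has_real_derivative \<phi>' x) (at x)) \<and> continuous_on UNIV \<phi>' \<and>
        (\<exists>\<delta>>0. \<forall>x\<in>{0<..<1}. \<bar>x - s\<bar> < \<delta> \<longrightarrow> u x - \<phi> x \<le> u s - \<phi> s)
        \<longrightarrow> h s (\<phi>' s) \<le> a)"

definition c_arc :: "((real \<Rightarrow> 'a) \<Rightarrow> real \<Rightarrow> real \<Rightarrow> real) \<Rightarrow> (real \<Rightarrow> 'a) \<Rightarrow> real" where
  "c_arc H \<gamma> = Inf {a. \<exists>u. visc_subsol (H \<gamma>) a u \<and> u 0 = u 1}"

definition a_zero :: "(real \<Rightarrow> 'a) set \<Rightarrow> ((real \<Rightarrow> 'a) \<Rightarrow> real \<Rightarrow> real \<Rightarrow> real) \<Rightarrow> real" where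
  "a_zero \<E> H = Max ((a_arc H) ` {\<gamma>\<in>\<E>. \<gamma> 0 \<noteq> \<gamma> 1} \<union> (c_arc H) ` {\<gamma>\<in>\<E>. \<gamma> 0 = \<gamma> 1})"

definition flat_condition :: "(real \<Rightarrow> 'a) set \<Rightarrow> ((real \<Rightarrow> 'a) \<Rightarrow> real \<Rightarrow> real \<Rightarrow> real) \<Rightarrow> bool" where
  "flat_condition \<E> H \<longleftrightarrow>
     (\<forall>\<gamma>\<in>\<E>. a_arc H \<gamma> = a_zero \<E> H \<longrightarrow>
        (\<forall>s\<in>{0..1}. \<forall>s'\<in>{0..1}. minH H \<gamma> s = minH H \<gamma> s'))"

definition sigma_plus :: "((real \<Rightarrow> 'a) \<Rightarrow> real \<Rightarrow> real \<Rightarrow> real) \<Rightarrow> real \<Rightarrow> (real \<Rightarrow> 'a) \<Rightarrow> real \<Rightarrow> real" where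
  "sigma_plus H a \<gamma> s = Sup {p. H \<gamma> s p = a}"

definition sigma :: "((real \<Rightarrow> 'a) \<Rightarrow> real \<Rightarrow> real \<Rightarrow> real) \<Rightarrow> real \<Rightarrow> (real \<Rightarrow> 'a) \<Rightarrow> real" where
  "sigma H a e = integral {0..1} (sigma_plus H a e)"

definition DFE_sol :: "(real \<Rightarrow> 'a) set \<Rightarrow> ((real \<Rightarrow> 'a) \<Rightarrow> real \<Rightarrow> real \<Rightarrow> real) \<Rightarrow> real \<Rightarrow> ('a \<Rightarrow> real) \<Rightarrow> bool" where
  "DFE_sol \<E> H a u \<longleftrightarrow>
     (\<forall>x\<in>vertices \<E>. u x = Min ((\<lambda>e. u (e 1) + sigma H a (rev_arc e)) ` {e\<in>\<E>. e 0 = x}))"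

definition DFE_subsol :: "(real \<Rightarrow> 'a) set \<Rightarrow> ((real \<Rightarrow> 'a) \<Rightarrow> real \<Rightarrow> real \<Rightarrow> real) \<Rightarrow> real \<Rightarrow> ('a \<Rightarrow> real) \<Rightarrow> bool" where
  "DFE_subsol \<E> H a u \<longleftrightarrow> (\<forall>e\<in>\<E>. u (e 1) - u (e 0) \<le> sigma H a e)"

definition critical_value :: "(real \<Rightarrow> 'a) set \<Rightarrow> ((real \<Rightarrow> 'a) \<Rightarrow> real \<Rightarrow> real \<Rightarrow> real) \<Rightarrow> real" where
  "critical_value \<E> H = Inf {a. a \<ge> a_zero \<E> H \<and> (\<exists>u. DFE_subsol \<E> H a u)}"

end

(*
  A solution u of (DFE_a) is in particular a subsolution, so c <= a. Conversely, every vertex has an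
  arc realising the minimum in (DFE_a), and following such optimal arcs in the finite graph closes a
  cycle. Comparing u with a subsolution at a level b in [a_0, a) around that cycle is impossible,
  because sigma_b < sigma_a on every arc: above max_s min_p H_gamma the maximal root
  sigma^+_{b,gamma}(s) is continuous in s (by quasiconvexity and coercivity) and strictly increasing
  in b. That every arc, closed or not, has a_gamma <= a_0 rests on a_gamma <= c_gamma: a viscosity
  subsolution at level a' touched from above by a steep parabola forces H_gamma <= a' somewhere
  near every point.
*)

theory Submission
  imports Defs
begin

lemma continuous_touched_from_above_by_parabola:
  fixes u :: "real \<Rightarrow> real"
  assumes "continuous_on {m - \<rho>..m + \<rho>} u" "\<rho> > 0"
  obtains x K where "x \<in> {m - \<rho><..<m + \<rho>}"
    "\<And>y. y \<in> {m - \<rho>..m + \<rho>} \<Longrightarrow> u y - K * (y - m)\<^sup>2 \<le> u x - K * (x - m)\<^sup>2"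
proof -
  let ?I = "{m - \<rho>..m + \<rho>}"
  obtain B where B: "\<And>y. y \<in> ?I \<Longrightarrow> \<bar>u y\<bar> \<le> B"
    using compact_continuous_image[OF assms(1) compact_Icc] compact_imp_bounded bounded_real
    by (metis image_eqI)
  text \<open>The parabola is chosen steep enough that \<open>u - \<phi>\<close> is smaller at both endpoints than at \<open>m\<close>.\<close>
  define K where "K = (2 * B + 1) / \<rho>\<^sup>2"
  define \<phi> where "\<phi> y = K * (y - m)\<^sup>2" for y
  have "\<exists>x\<in>?I. \<forall>y\<in>?I. u y - \<phi> y \<le> u x - \<phi> x"
    by (rule continuous_attains_sup) (use assms in \<open>auto intro!: continuous_intros simp: \<phi>_def\<close>)
  then obtain x where x: "x \<in> ?I" "\<And>y. y \<in> ?I \<Longrightarrow> u y - \<phi> y \<le> u x - \<phi> x"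
    by blast
  have endpoint: "u y - \<phi> y < u m - \<phi> m" if "y = m - \<rho> \<or> y = m + \<rho>" for y
  proof -
    have "\<phi> y = 2 * B + 1"
      using that assms(2) by (auto simp: \<phi>_def K_def power2_eq_square)
    moreover have "y \<in> ?I" "m \<in> ?I"
      using that assms(2) by auto
    ultimately show ?thesis
      using B[of y] B[of m] by (simp add: \<phi>_def)
  qed
  have "\<not> (x = m - \<rho> \<or> x = m + \<rho>)"
  proof
    assume "x = m - \<rho> \<or> x = m + \<rho>"
    then have "u x - \<phi> x < u m - \<phi> m"
      by (rule endpoint)
    moreover have "u m - \<phi> m \<le> u x - \<phi> x"
      using x assms(2) by simp
    ultimately show False
      by linarith
  qed
  then have "x \<in> {m - \<rho><..<m + \<rho>}"
    using x(1) by auto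
  then show thesis
    using that x(2) unfolding \<phi>_def by blast
qed

lemma visc_subsol_sublevel_in_interval:
  assumes u: "visc_subsol h a u" and "\<rho> > 0" "{m - \<rho>..m + \<rho>} \<subseteq> {0<..<1}"
  obtains x p where "x \<in> {m - \<rho><..<m + \<rho>}" "h x p \<le> a"
proof -
  have "continuous_on {m - \<rho>..m + \<rho>} u"
    using u assms(3) unfolding visc_subsol_def
    by (meson continuous_on_subset greaterThanLessThan_subseteq_atLeastAtMost_iff order_refl subset_trans)
  then obtain x K where x: "x \<in> {m - \<rho><..<m + \<rho>}"
    and max: "\<And>y. y \<in> {m - \<rho>..m + \<rho>} \<Longrightarrow> u y - K * (y - m)\<^sup>2 \<le> u x - K * (x - m)\<^sup>2"
    using continuous_touched_from_above_by_parabola assms(2) by blast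
  define \<delta> where "\<delta> = min (x - (m - \<rho>)) (m + \<rho> - x)"
  have "\<delta> > 0"
    using x by (simp add: \<delta>_def)
  moreover have "u y - K * (y - m)\<^sup>2 \<le> u x - K * (x - m)\<^sup>2" if "\<bar>y - x\<bar> < \<delta>" for y
    using that by (intro max) (auto simp: \<delta>_def)
  ultimately have "\<exists>\<delta>>0. \<forall>y\<in>{0<..<1}. \<bar>y - x\<bar> < \<delta> \<longrightarrow> u y - K * (y - m)\<^sup>2 \<le> u x - K * (x - m)\<^sup>2"
    by blast
  moreover have "\<forall>y. ((\<lambda>y. K * (y - m)\<^sup>2) has_real_derivative 2 * K * (y - m)) (at y)"
    by (auto intro!: derivative_eq_intros)
  moreover have "continuous_on UNIV (\<lambda>y. 2 * K * (y - m))"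
    by (intro continuous_intros)
  moreover have "x \<in> {0<..<1}"
    using x assms(3) greaterThanLessThan_subseteq_atLeastAtMost_iff by blast
  ultimately have "h x (2 * K * (x - m)) \<le> a"
    using u[unfolded visc_subsol_def, THEN conjunct2, rule_format,
        of x "\<lambda>y. K * (y - m)\<^sup>2" "\<lambda>y. 2 * K * (y - m)"] by blast
  then show thesis
    using that x by blast
qed

definition max_root :: "(real \<Rightarrow> real \<Rightarrow> real) \<Rightarrow> real \<Rightarrow> real \<Rightarrow> real" where
  "max_root h b s = Sup {p. h s p = b}"

locale coercive_hamiltonian =
  fixes h :: "real \<Rightarrow> real \<Rightarrow> real"
  assumes continuous: "continuous_on ({0..1} \<times> UNIV) (\<lambda>(s, p). h s p)"
    and coercive: "\<And>M. \<exists>R. \<forall>s\<in>{0..1}. \<forall>p. \<bar>p\<bar> \<ge> R \<longrightarrow> h s p \<ge> M"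
begin

lemma continuous_on_momentum:
  assumes "s \<in> {0..1}"
  shows "continuous_on UNIV (h s)"
proof -
  have "continuous_on UNIV ((\<lambda>(s, p). h s p) \<circ> Pair s)"
    by (rule continuous_on_compose)
      (auto intro!: continuous_intros continuous_on_subset[OF continuous] simp: assms[simplified])
  then show ?thesis
    by (simp add: o_def)
qed

lemma continuous_on_position: "continuous_on {0..1} (\<lambda>s. h s p)"
proof -
  have "continuous_on {0..1} ((\<lambda>(s, p). h s p) \<circ> (\<lambda>s. (s, p)))"
    by (rule continuous_on_compose) (auto intro!: continuous_intros continuous_on_subset[OF continuous])
  then show ?thesis
    by (simp add: o_def)
qed

lemma sublevel_bounded:
  obtains R where "\<And>s p. s \<in> {0..1} \<Longrightarrow> h s p \<le> b \<Longrightarrow> \<bar>p\<bar> < R"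
proof -
  obtain R where R: "\<forall>s\<in>{0..1}. \<forall>p. \<bar>p\<bar> \<ge> R \<longrightarrow> h s p \<ge> b + 1"
    using coercive[of "b + 1"] by blast
  show thesis
    by (rule that[of R]) (smt (verit) R)
qed

lemma closed_projection_sublevel: "closed (fst ` ({0..1} \<times> {l..r} \<inter> (\<lambda>(s, p). h s p) -` {..b}))"
proof -
  have "closed ({0..1} \<times> {l..r} \<inter> (\<lambda>(s, p). h s p) -` {..b})"
    by (rule continuous_closed_preimage) (auto intro: continuous_on_subset[OF continuous] closed_Times)
  moreover have "bounded ({0..1::real} \<times> {l..r::real})"
    by (intro bounded_Times) auto
  ultimately have "compact ({0..1} \<times> {l..r} \<inter> (\<lambda>(s, p). h s p) -` {..b})"
    by (meson Int_lower1 compact_eq_bounded_closed bounded_subset)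
  then show ?thesis
    by (intro compact_imp_closed compact_continuous_image continuous_intros)
qed

lemma gt_on_interval_nearby:
  assumes "\<And>p. p \<in> {l..r} \<Longrightarrow> h s\<^sub>0 p > b"
  obtains d where "d > 0" "\<And>s p. s \<in> {0..1} \<Longrightarrow> \<bar>s - s\<^sub>0\<bar> < d \<Longrightarrow> p \<in> {l..r} \<Longrightarrow> h s p > b"
proof -
  let ?P = "fst ` ({0..1} \<times> {l..r} \<inter> (\<lambda>(s, p). h s p) -` {..b})"
  have "s\<^sub>0 \<notin> ?P"
    using assms by force
  moreover have "open (- ?P)"
    using closed_projection_sublevel by auto
  ultimately obtain d where d: "d > 0" "ball s\<^sub>0 d \<subseteq> - ?P"
    by (meson ComplI open_contains_ball)
  show thesis
  proof (rule that[OF d(1)])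
    fix s p assume s: "s \<in> {0..1}" "\<bar>s - s\<^sub>0\<bar> < d" and p: "p \<in> {l..r}"
    then have "s \<in> ball s\<^sub>0 d"
      by (simp add: dist_real_def abs_minus_commute)
    then have "s \<notin> ?P"
      using d(2) by blast
    then show "h s p > b"
      using s p by (force simp: image_iff)
  qed
qed

lemma exists_minimizer:
  assumes "s \<in> {0..1}"
  obtains p\<^sub>0 where "\<And>p. h s p\<^sub>0 \<le> h s p"
proof -
  obtain R where R: "\<And>p. h s p \<le> h s 0 \<Longrightarrow> \<bar>p\<bar> < R"
    using sublevel_bounded[of "h s 0"] assms by metis
  then have "0 \<in> {-R..R}"
    by force
  moreover have "continuous_on {-R..R} (h s)"
    using continuous_on_subset[OF continuous_on_momentum[OF assms]] by blast
  ultimately obtain p\<^sub>0 where p\<^sub>0: "\<forall>p\<in>{-R..R}. h s p\<^sub>0 \<le> h s p"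
    using continuous_attains_inf[of "{-R..R}" "h s"] by fastforce
  have "h s p\<^sub>0 \<le> h s p" for p
  proof (cases "h s p \<le> h s 0")
    case True
    then have "p \<in> {-R..R}"
      using R by fastforce
    then show ?thesis
      using p\<^sub>0 by blast
  next
    case False
    then show ?thesis
      using p\<^sub>0 \<open>0 \<in> {-R..R}\<close> by fastforce
  qed
  then show thesis
    using that by blast
qed

lemma INF_attained:
  assumes "s \<in> {0..1}"
  obtains p\<^sub>0 where "(INF p. h s p) = h s p\<^sub>0" "\<And>p. h s p\<^sub>0 \<le> h s p"
proof -
  obtain p\<^sub>0 where p\<^sub>0: "\<And>p. h s p\<^sub>0 \<le> h s p"
    using exists_minimizer[OF assms] by blast
  have "(INF p. h s p) = h s p\<^sub>0"
    by (intro antisym cINF_lower cINF_greatest) (auto intro: bdd_belowI2 p\<^sub>0)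
  then show thesis
    using that p\<^sub>0 by blast
qed

lemma bdd_above_at_zero_momentum:
  obtains B where "\<And>s. s \<in> {0..1} \<Longrightarrow> h s 0 \<le> B"
proof -
  have "compact ((\<lambda>s. h s 0) ` {0..1})"
    by (intro compact_continuous_image continuous_on_position) auto
  then obtain B where "\<forall>x\<in>(\<lambda>s. h s 0) ` {0..1}. \<bar>x\<bar> \<le> B"
    using compact_imp_bounded bounded_real by blast
  then show thesis
    using that by (metis abs_le_D1 image_eqI)
qed

lemma sublevel_nonempty:
  assumes "s \<in> {0..1}" "(SUP s\<in>{0..1}. INF p. h s p) \<le> b"
  obtains q where "h s q \<le> b"
proof -
  obtain B where B: "\<And>s. s \<in> {0..1} \<Longrightarrow> h s 0 \<le> B"
    using bdd_above_at_zero_momentum by blast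
  have "(INF p. h s p) \<le> h s 0" if "s \<in> {0..1}" for s
    using INF_attained[OF that] by metis
  then have "bdd_above ((\<lambda>s. INF p. h s p) ` {0..1})"
    by (intro bdd_aboveI2[of _ _ B]) (use B in force)
  then have "(INF p. h s p) \<le> b"
    using cSUP_upper[OF assms(1)] assms(2) by (meson order_trans)
  then show thesis
    using INF_attained[OF assms(1)] that by metis
qed

lemma level_reached_above:
  assumes "s \<in> {0..1}" "h s q \<le> b"
  obtains x where "x \<ge> q" "h s x = b"
proof -
  obtain R where R: "\<forall>s\<in>{0..1}. \<forall>p. \<bar>p\<bar> \<ge> R \<longrightarrow> h s p \<ge> b + 1"
    using coercive[of "b + 1"] by blast
  define r where "r = \<bar>R\<bar> + \<bar>q\<bar>"
  have "q \<le> r" "R \<le> \<bar>r\<bar>"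
    by (auto simp: r_def)
  then have "b \<le> h s r"
    using R assms(1) by force
  moreover have "continuous_on {q..r} (h s)"
    using continuous_on_subset[OF continuous_on_momentum[OF assms(1)]] by blast
  ultimately show thesis
    using IVT'[of "h s" q b r] assms(2) \<open>q \<le> r\<close> that by blast
qed

lemma
  assumes "s \<in> {0..1}" "h s q \<le> b"
  shows max_root_level: "h s (max_root h b s) = b"
    and le_max_root: "h s p \<le> b \<Longrightarrow> p \<le> max_root h b s"
proof -
  obtain R where R: "\<And>s p. s \<in> {0..1} \<Longrightarrow> h s p \<le> b \<Longrightarrow> \<bar>p\<bar> < R"
    using sublevel_bounded by blast
  have bdd: "bdd_above {p. h s p = b}"
    by (rule bdd_aboveI[of _ R]) (use R[OF assms(1)] in fastforce)
  have "{p. h s p = b} \<noteq> {}"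
    using level_reached_above[OF assms] by blast
  moreover have "closed {p. h s p = b}"
    using continuous_closed_vimage[of "{b}" "h s"] continuous_on_momentum[OF assms(1)]
    by (simp add: vimage_def continuous_on_eq_continuous_at)
  ultimately show "h s (max_root h b s) = b"
    using closed_contains_Sup[OF _ bdd] unfolding max_root_def by blast
  assume "h s p \<le> b"
  then obtain x where "x \<ge> p" "h s x = b"
    using level_reached_above[OF assms(1)] by blast
  then show "p \<le> max_root h b s"
    unfolding max_root_def using cSup_upper[OF _ bdd, of x] by auto
qed

lemma max_root_strict_mono:
  assumes "s \<in> {0..1}" "h s q \<le> b" "b < a"
  shows "max_root h b s < max_root h a s"
proof -
  have q: "h s q \<le> a"
    using assms by simp
  have "max_root h b s \<le> max_root h a s"
    using le_max_root[OF assms(1) q] max_root_level[OF assms(1,2)] assms(3) by simp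
  moreover have "max_root h b s \<noteq> max_root h a s"
    using max_root_level[OF assms(1,2)] max_root_level[OF assms(1) q] assms(3) by force
  ultimately show ?thesis
    by simp
qed

lemma closed_max_root_ge:
  assumes "\<And>s. s \<in> {0..1} \<Longrightarrow> \<exists>q. h s q \<le> b"
  shows "closed {s\<in>{0..1}. t \<le> max_root h b s}"
proof -
  obtain R where R: "\<And>s p. s \<in> {0..1} \<Longrightarrow> h s p \<le> b \<Longrightarrow> \<bar>p\<bar> < R"
    using sublevel_bounded by blast
  have "{s\<in>{0..1}. t \<le> max_root h b s} = fst ` ({0..1} \<times> {t..R} \<inter> (\<lambda>(s, p). h s p) -` {..b})"
  proof (intro equalityI subsetI)
    fix s assume s: "s \<in> {s\<in>{0..1}. t \<le> max_root h b s}"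
    then have "h s (max_root h b s) = b"
      using assms max_root_level by blast
    with s have "(s, max_root h b s) \<in> {0..1} \<times> {t..R} \<inter> (\<lambda>(s, p). h s p) -` {..b}"
      using R[of s "max_root h b s"] by auto
    then show "s \<in> fst ` ({0..1} \<times> {t..R} \<inter> (\<lambda>(s, p). h s p) -` {..b})"
      by (metis fst_conv image_eqI)
  next
    fix s assume "s \<in> fst ` ({0..1} \<times> {t..R} \<inter> (\<lambda>(s, p). h s p) -` {..b})"
    then obtain p where "s \<in> {0..1}" "t \<le> p" "h s p \<le> b"
      by auto
    then show "s \<in> {s\<in>{0..1}. t \<le> max_root h b s}"
      using le_max_root by force
  qed
  then show ?thesis
    using closed_projection_sublevel by simp
qed


lemma SUP_INF_le_visc_subsol:
  assumes u: "visc_subsol h a u"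
  shows "(SUP s\<in>{0..1}. INF p. h s p) \<le> a"
proof (rule cSUP_least)
  fix s\<^sub>0 :: real assume s\<^sub>0: "s\<^sub>0 \<in> {0..1}"
  show "(INF p. h s\<^sub>0 p) \<le> a"
  proof (rule ccontr)
    assume "\<not> (INF p. h s\<^sub>0 p) \<le> a"
    moreover obtain p\<^sub>0 where "(INF p. h s\<^sub>0 p) = h s\<^sub>0 p\<^sub>0" "\<And>p. h s\<^sub>0 p\<^sub>0 \<le> h s\<^sub>0 p"
      using INF_attained[OF s\<^sub>0] by blast
    ultimately have gt: "a < h s\<^sub>0 p" for p
      by (metis not_le order_less_le_trans)
    obtain R where R: "\<And>s p. s \<in> {0..1} \<Longrightarrow> h s p \<le> a \<Longrightarrow> \<bar>p\<bar> < R"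
      using sublevel_bounded by blast
    obtain d where "d > 0" and d: "\<And>s p. s \<in> {0..1} \<Longrightarrow> \<bar>s - s\<^sub>0\<bar> < d \<Longrightarrow> p \<in> {-R..R} \<Longrightarrow> a < h s p"
      using gt_on_interval_nearby[of "-R" R a s\<^sub>0] gt by blast
    have no_sublevel: "a < h s p" if "s \<in> {0..1}" "\<bar>s - s\<^sub>0\<bar> < d" for s p
    proof (rule ccontr)
      assume "\<not> a < h s p"
      then have "p \<in> {-R..R}"
        using R[OF that(1), of p] by (auto simp: abs_less_iff)
      then show False
        using d[OF that] \<open>\<not> a < h s p\<close> by blast
    qed
    define e where "e = min (d / 4) (1 / 4)"
    define \<rho> where "\<rho> = e / 2"
    define m where "m = (if s\<^sub>0 \<le> 1 / 2 then s\<^sub>0 + e else s\<^sub>0 - e)"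
    have "\<rho> > 0" "0 < m - \<rho>" "m + \<rho> < 1" "\<bar>m - s\<^sub>0\<bar> + \<rho> < d"
      using \<open>d > 0\<close> s\<^sub>0 unfolding \<rho>_def m_def e_def by auto
    then have I: "{m - \<rho>..m + \<rho>} \<subseteq> {0<..<1}"
      by auto
    then obtain x p where x: "x \<in> {m - \<rho><..<m + \<rho>}" and "h x p \<le> a"
      using visc_subsol_sublevel_in_interval[OF u \<open>\<rho> > 0\<close>] by blast
    moreover have "x \<in> {0..1}"
      using x \<open>0 < m - \<rho>\<close> \<open>m + \<rho> < 1\<close> by auto
    moreover have "\<bar>x - s\<^sub>0\<bar> < d"
      using x \<open>\<bar>m - s\<^sub>0\<bar> + \<rho> < d\<close> by auto
    ultimately show False
      using no_sublevel[of x p] by simp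
  qed
qed simp

lemma periodic_visc_subsol_exists: "\<exists>a u. visc_subsol h a u \<and> u 0 = u 1"
proof -
  obtain B where B: "\<And>s. s \<in> {0..1} \<Longrightarrow> h s 0 \<le> B"
    using bdd_above_at_zero_momentum by blast
  text \<open>A test function touching a constant from above has a local minimum, hence zero slope.\<close>
  have key: "h s (\<phi>' s) \<le> B"
    if s: "s \<in> {0<..<1}" and \<phi>: "\<forall>x. (\<phi> has_real_derivative \<phi>' x) (at x)"
      and "\<delta> > 0" and \<delta>: "\<forall>x\<in>{0<..<1}. \<bar>x - s\<bar> < \<delta> \<longrightarrow> 0 - \<phi> x \<le> 0 - \<phi> s"
    for s \<delta> :: real and \<phi> \<phi>'
  proof -
    define d where "d = min \<delta> (min s (1 - s))"
    have "d > 0"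
      using \<open>\<delta> > 0\<close> s by (simp add: d_def)
    moreover have "\<phi> s \<le> \<phi> y" if "\<bar>s - y\<bar> < d" for y
    proof -
      have "y \<in> {0<..<1}" "\<bar>y - s\<bar> < \<delta>"
        using that unfolding d_def by auto
      then have "0 - \<phi> y \<le> 0 - \<phi> s"
        by (rule \<delta>[rule_format])
      then show ?thesis
        by simp
    qed
    ultimately have "\<phi>' s = 0"
      using DERIV_local_min[of \<phi> "\<phi>' s" s d] \<phi> by blast
    then show ?thesis
      using B s by simp
  qed
  have "visc_subsol h B (\<lambda>_. 0)"
    unfolding visc_subsol_def
  proof (intro conjI ballI allI impI)
    fix s \<phi> \<phi>'
    assume "s \<in> {0<..<1::real}" "(\<forall>x. (\<phi> has_real_derivative \<phi>' x) (at x)) \<and> continuous_on UNIV \<phi>' \<and>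
      (\<exists>\<delta>>0. \<forall>x\<in>{0<..<1}. \<bar>x - s\<bar> < \<delta> \<longrightarrow> 0 - \<phi> x \<le> 0 - \<phi> s)"
    then show "h s (\<phi>' s) \<le> B"
      using key[where s = s and \<phi> = \<phi> and \<phi>' = \<phi>'] by blast
  qed simp
  then show ?thesis
    by blast
qed

end

locale quasiconvex_hamiltonian = coercive_hamiltonian +
  assumes convex_sublevel: "\<And>s b. s \<in> {0..1} \<Longrightarrow> convex {p. h s p \<le> b}"
    and interior_sublevel: "\<And>s b. s \<in> {0..1} \<Longrightarrow> interior {p. h s p \<le> b} = {p. h s p < b}"
begin

lemma lt_between_sublevel_and_max_root:
  assumes "s \<in> {0..1}" "h s p \<le> b" "p < x" "x < max_root h b s"
  shows "h s x < b"
proof -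
  have iv: "is_interval {q. h s q \<le> b}"
    using convex_sublevel[OF assms(1)] is_interval_convex_1 by blast
  have "h s (max_root h b s) \<le> b"
    using max_root_level[OF assms(1,2)] by simp
  then have "{p..max_root h b s} \<subseteq> {q. h s q \<le> b}"
    using iv[unfolded is_interval_1, rule_format, of p "max_root h b s"] assms(2) by auto
  then have "{p<..<max_root h b s} \<subseteq> {q. h s q \<le> b}"
    by (meson greaterThanLessThan_subseteq_atLeastAtMost_iff order_refl subset_trans)
  then have "{p<..<max_root h b s} \<subseteq> interior {q. h s q \<le> b}"
    by (simp add: interior_maximal)
  moreover have "x \<in> {p<..<max_root h b s}"
    using assms(3,4) by simp
  ultimately show ?thesis
    using interior_sublevel[OF assms(1)] by blast
qed

lemma max_root_gt_nearby:
  assumes ex: "\<And>s. s \<in> {0..1} \<Longrightarrow> \<exists>q. h s q \<le> b"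
    and s\<^sub>0: "s\<^sub>0 \<in> {0..1}" "t < max_root h b s\<^sub>0"
  obtains d where "d > 0" "\<And>s. s \<in> {0..1} \<Longrightarrow> \<bar>s - s\<^sub>0\<bar> < d \<Longrightarrow> t < max_root h b s"
proof (cases "\<exists>p>t. h s\<^sub>0 p < b")
  case True
  then obtain p where p: "t < p" "h s\<^sub>0 p < b"
    by blast
  have cont: "\<forall>e>0. \<exists>d>0. \<forall>s\<in>{0..1}. dist s s\<^sub>0 < d \<longrightarrow> dist (h s p) (h s\<^sub>0 p) < e"
    using continuous_on_position[of p] s\<^sub>0(1) unfolding continuous_on_iff by blast
  obtain d where "d > 0" and d: "\<forall>s\<in>{0..1}. dist s s\<^sub>0 < d \<longrightarrow> dist (h s p) (h s\<^sub>0 p) < b - h s\<^sub>0 p"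
    using cont[rule_format, of "b - h s\<^sub>0 p"] p(2) by auto
  show thesis
  proof (rule that[OF \<open>d > 0\<close>])
    fix s assume s: "s \<in> {0..1}" "\<bar>s - s\<^sub>0\<bar> < d"
    then have "\<bar>h s p - h s\<^sub>0 p\<bar> < b - h s\<^sub>0 p"
      using d by (simp add: dist_real_def)
    then have "h s p \<le> b"
      by linarith
    then show "t < max_root h b s"
      using le_max_root[OF s(1)] p(1) by fastforce
  qed
next
  case False
  obtain R where R: "\<And>s p. s \<in> {0..1} \<Longrightarrow> h s p \<le> b \<Longrightarrow> \<bar>p\<bar> < R"
    using sublevel_bounded by blast
  text \<open>A sublevel point \<open>p \<le> t\<close> at \<open>s\<^sub>0\<close> is impossible: by quasiconvexity the midpoint of \<open>t\<close>
    and the maximal root would be a strict sublevel point above \<open>t\<close>.\<close>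
  have "b < h s\<^sub>0 p" if "p \<in> {-R..t}" for p
  proof (rule ccontr)
    assume "\<not> b < h s\<^sub>0 p"
    define x where "x = (t + max_root h b s\<^sub>0) / 2"
    have "p < x" "x < max_root h b s\<^sub>0" "t < x"
      using that s\<^sub>0(2) by (auto simp: x_def)
    then have "h s\<^sub>0 x < b"
      using lt_between_sublevel_and_max_root[OF s\<^sub>0(1), of p b x] \<open>\<not> b < h s\<^sub>0 p\<close> by simp
    then show False
      using False \<open>t < x\<close> by blast
  qed
  then obtain d where "d > 0" and d: "\<And>s p. s \<in> {0..1} \<Longrightarrow> \<bar>s - s\<^sub>0\<bar> < d \<Longrightarrow> p \<in> {-R..t} \<Longrightarrow> b < h s p"
    using gt_on_interval_nearby[of "-R" t] by blast
  show thesis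
  proof (rule that[OF \<open>d > 0\<close>])
    fix s assume s: "s \<in> {0..1}" "\<bar>s - s\<^sub>0\<bar> < d"
    then have "h s (max_root h b s) = b"
      using ex max_root_level by blast
    then have "max_root h b s \<notin> {-R..t}" "\<bar>max_root h b s\<bar> < R"
      using d[OF s, of "max_root h b s"] R[OF s(1), of "max_root h b s"] by auto
    then show "t < max_root h b s"
      by auto
  qed
qed

lemma continuous_on_max_root:
  assumes "\<And>s. s \<in> {0..1} \<Longrightarrow> \<exists>q. h s q \<le> b"
  shows "continuous_on {0..1} (max_root h b)"
proof -
  have "openin (top_of_set {0..1}) {s\<in>{0..1}. max_root h b s < t}" for t
  proof -
    have "{s\<in>{0..1}. max_root h b s < t} = {0..1} \<inter> - {s\<in>{0..1}. t \<le> max_root h b s}"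
      by auto
    then show ?thesis
      using closed_max_root_ge[OF assms] by (metis inf_commute open_Compl openin_open_Int)
  qed
  moreover have "openin (top_of_set {0..1}) {s\<in>{0..1}. t < max_root h b s}" for t
    unfolding openin_euclidean_subtopology_iff
  proof (intro conjI ballI)
    fix s\<^sub>0 assume "s\<^sub>0 \<in> {s\<in>{0..1}. t < max_root h b s}"
    then obtain d where "d > 0" "\<And>s. s \<in> {0..1} \<Longrightarrow> \<bar>s - s\<^sub>0\<bar> < d \<Longrightarrow> t < max_root h b s"
      using max_root_gt_nearby[OF assms] by blast
    then show "\<exists>d>0. \<forall>s\<in>{0..1}. dist s s\<^sub>0 < d \<longrightarrow> s \<in> {s\<in>{0..1}. t < max_root h b s}"
      by (auto simp: dist_real_def)
  qed auto
  ultimately have "continuous_map (top_of_set {0..1}) euclidean (max_root h b)"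
    unfolding continuous_map_upper_lower_semicontinuous_lt by simp
  then show ?thesis
    by simp
qed

lemma integral_max_root_strict_mono:
  assumes "\<And>s. s \<in> {0..1} \<Longrightarrow> \<exists>q. h s q \<le> b" "b < a"
  shows "integral {0..1} (max_root h b) < integral {0..1} (max_root h a)"
proof (rule integral_less_real)
  show "continuous_on {0..1} (max_root h b)"
    by (rule continuous_on_max_root) (use assms(1) in blast)
  show "continuous_on {0..1} (max_root h a)"
    by (rule continuous_on_max_root) (meson assms less_imp_le order_trans)
  fix s :: real assume "s \<in> {0<..<1}"
  then have "s \<in> {0..1}"
    by auto
  then obtain q where "h s q \<le> b"
    using assms(1) by blast
  then show "max_root h b s < max_root h a s"
    using max_root_strict_mono \<open>s \<in> {0..1}\<close> assms(2) by blast
qed simp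

end


lemma quasiconvex_hamiltonian_arc:
  assumes "hamiltonians \<E> H" "\<gamma> \<in> \<E>"
  shows "quasiconvex_hamiltonian (H \<gamma>)"
  using assms unfolding hamiltonians_def by unfold_locales blast+

lemma sigma_plus_eq_max_root: "sigma_plus H a \<gamma> = max_root (H \<gamma>) a"
  by (simp add: sigma_plus_def max_root_def fun_eq_iff)

lemma a_arc_le_c_arc:
  assumes "hamiltonians \<E> H" "\<gamma> \<in> \<E>"
  shows "a_arc H \<gamma> \<le> c_arc H \<gamma>"
proof -
  interpret quasiconvex_hamiltonian "H \<gamma>"
    using quasiconvex_hamiltonian_arc[OF assms] .
  show ?thesis
    unfolding c_arc_def a_arc_def minH_def
    using periodic_visc_subsol_exists SUP_INF_le_visc_subsol by (intro cInf_greatest) auto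
qed

lemma a_arc_le_a_zero:
  assumes "finite \<E>" "hamiltonians \<E> H" "\<gamma> \<in> \<E>"
  shows "a_arc H \<gamma> \<le> a_zero \<E> H"
proof -
  let ?S = "a_arc H ` {\<gamma>\<in>\<E>. \<gamma> 0 \<noteq> \<gamma> 1} \<union> c_arc H ` {\<gamma>\<in>\<E>. \<gamma> 0 = \<gamma> 1}"
  have "finite ?S"
    using assms(1) by simp
  moreover have "a_arc H \<gamma> \<in> ?S \<or> c_arc H \<gamma> \<in> ?S"
    using assms(3) by blast
  ultimately show ?thesis
    unfolding a_zero_def using a_arc_le_c_arc[OF assms(2,3)] by (meson Max_ge order_trans)
qed

lemma sigma_strict_mono:
  assumes "hamiltonians \<E> H" "\<gamma> \<in> \<E>" "a_arc H \<gamma> \<le> b" "b < a"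
  shows "sigma H b \<gamma> < sigma H a \<gamma>"
proof -
  interpret quasiconvex_hamiltonian "H \<gamma>"
    using quasiconvex_hamiltonian_arc[OF assms(1,2)] .
  have "\<exists>q. H \<gamma> s q \<le> b" if "s \<in> {0..1}" for s
    using sublevel_nonempty[OF that] assms(3) unfolding a_arc_def minH_def by metis
  then show ?thesis
    unfolding sigma_def sigma_plus_eq_max_root using integral_max_root_strict_mono assms(4) by blast
qed

lemma rev_arc_rev_arc [simp]: "rev_arc (rev_arc \<gamma>) = \<gamma>"
  by (simp add: rev_arc_def)

lemma rev_arc_0 [simp]: "rev_arc \<gamma> 0 = \<gamma> 1"
  and rev_arc_1 [simp]: "rev_arc \<gamma> 1 = \<gamma> 0"
  by (simp_all add: rev_arc_def)

lemma network_arcs: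
  assumes "network \<E>"
  shows "finite \<E>" "\<E> \<noteq> {}" "\<And>\<gamma>. \<gamma> \<in> \<E> \<Longrightarrow> rev_arc \<gamma> \<in> \<E>"
  using assms by (simp_all add: network_def)

lemma DFE_sol_imp_subsol:
  assumes "finite \<E>" "\<And>\<gamma>. \<gamma> \<in> \<E> \<Longrightarrow> rev_arc \<gamma> \<in> \<E>" "DFE_sol \<E> H a u"
  shows "DFE_subsol \<E> H a u"
  unfolding DFE_subsol_def
proof
  fix e assume e: "e \<in> \<E>"
  then have "e 1 \<in> vertices \<E>" and rev_e: "rev_arc e \<in> {e'\<in>\<E>. e' 0 = e 1}"
    using assms(2) unfolding vertices_def by auto
  then have "u (e 1) = Min ((\<lambda>e'. u (e' 1) + sigma H a (rev_arc e')) ` {e'\<in>\<E>. e' 0 = e 1})"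
    using assms(3) unfolding DFE_sol_def by blast
  also have "\<dots> \<le> u (rev_arc e 1) + sigma H a (rev_arc (rev_arc e))"
    using assms(1) imageI[OF rev_e, of "\<lambda>e'. u (e' 1) + sigma H a (rev_arc e')"] by (intro Min_le) auto
  finally show "u (e 1) - u (e 0) \<le> sigma H a e"
    by simp
qed

lemma DFE_sol_optimal_arc:
  assumes "finite \<E>" "\<And>\<gamma>. \<gamma> \<in> \<E> \<Longrightarrow> rev_arc \<gamma> \<in> \<E>" "DFE_sol \<E> H a u" "x \<in> vertices \<E>"
  obtains e where "e \<in> \<E>" "e 0 = x" "u x = u (e 1) + sigma H a (rev_arc e)"
proof -
  let ?A = "{e\<in>\<E>. e 0 = x}"
  have "?A \<noteq> {}"
    using assms(2,4) unfolding vertices_def by force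
  then have "Min ((\<lambda>e. u (e 1) + sigma H a (rev_arc e)) ` ?A) \<in> (\<lambda>e. u (e 1) + sigma H a (rev_arc e)) ` ?A"
    using assms(1) by (intro Min_in) auto
  moreover have "u x = Min ((\<lambda>e. u (e 1) + sigma H a (rev_arc e)) ` ?A)"
    using assms(3,4) unfolding DFE_sol_def by blast
  ultimately show thesis
    using that by force
qed

lemma DFE_sol_optimal_cycle:
  assumes "finite \<E>" "\<E> \<noteq> {}" "\<And>\<gamma>. \<gamma> \<in> \<E> \<Longrightarrow> rev_arc \<gamma> \<in> \<E>" "DFE_sol \<E> H a u"
  obtains i j and e :: "nat \<Rightarrow> real \<Rightarrow> 'a" where "i < j" "e i 0 = e j 0"
    "\<And>k. e k \<in> \<E>" "\<And>k. e k 1 = e (Suc k) 0"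
    "\<And>k. u (e k 0) - u (e k 1) = sigma H a (rev_arc (e k))"
proof -
  have "\<forall>x\<in>vertices \<E>. \<exists>e. e \<in> \<E> \<and> e 0 = x \<and> u x = u (e 1) + sigma H a (rev_arc e)"
    using DFE_sol_optimal_arc[OF assms(1,3,4)] by metis
  then obtain next_arc where next_arc: "\<And>x. x \<in> vertices \<E> \<Longrightarrow>
      next_arc x \<in> \<E> \<and> next_arc x 0 = x \<and> u x = u (next_arc x 1) + sigma H a (rev_arc (next_arc x))"
    by metis
  obtain x\<^sub>0 where "x\<^sub>0 \<in> vertices \<E>"
    using assms(2) unfolding vertices_def by blast
  define x where "x n = ((\<lambda>y. next_arc y 1) ^^ n) x\<^sub>0" for n
  have x_vertex: "x n \<in> vertices \<E>" for n
  proof (induction n)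
    case (Suc n)
    then show ?case
      using next_arc[of "x n"] unfolding x_def vertices_def by auto
  qed (simp add: x_def \<open>x\<^sub>0 \<in> vertices \<E>\<close>)
  have x_Suc: "x (Suc n) = next_arc (x n) 1" for n
    by (simp add: x_def)
  have "finite (vertices \<E>)"
    using assms(1) unfolding vertices_def by (simp add: setcompr_eq_image)
  then have "\<not> inj x"
    using x_vertex finite_subset[of "range x" "vertices \<E>"] by (metis finite_imageD image_subsetI infinite_UNIV_nat)
  then obtain i j where "i < j" "x i = x j"
    unfolding inj_def by (metis linorder_neqE_nat)
  show thesis
  proof (rule that[of i j "\<lambda>k. next_arc (x k)"])
    show "next_arc (x i) 0 = next_arc (x j) 0"
      using next_arc x_vertex \<open>x i = x j\<close> by simp
    show "next_arc (x k) 1 = next_arc (x (Suc k)) 0" for k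
      using next_arc[OF x_vertex[of "Suc k"]] x_Suc[of k] by simp
  qed (use \<open>i < j\<close> next_arc[OF x_vertex] in auto)
qed

lemma sum_increments_along_cycle:
  fixes w :: "'a \<Rightarrow> 'b::ab_group_add"
  assumes "\<And>k. e k 1 = e (Suc k) 0" "e i 0 = e j 0" "i \<le> j"
  shows "(\<Sum>k=i..<j. w (e k 0) - w (e k 1)) = 0"
proof -
  have "(\<Sum>k=i..<j. w (e k 0) - w (e k 1)) = - (\<Sum>k=i..<j. w (e (Suc k) 0) - w (e k 0))"
    by (simp add: assms(1) sum_negf[symmetric])
  also have "\<dots> = 0"
    using sum_Suc_diff'[OF assms(3), of "\<lambda>k. w (e k 0)"] assms(2) by simp
  finally show ?thesis .
qed

text \<open>Along a cycle of optimal arcs the costs \<open>\<sigma>\<^sub>a\<close> add up to zero, while a subsolution at a level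
  \<open>b < a\<close> would make the strictly smaller costs \<open>\<sigma>\<^sub>b\<close> add up to a nonnegative number.\<close>
lemma DFE_sol_level_le_subsol_level:
  assumes "network \<E>" "hamiltonians \<E> H" "DFE_sol \<E> H a u" "a_zero \<E> H \<le> b" "DFE_subsol \<E> H b v"
  shows "a \<le> b"
proof (rule ccontr)
  assume "\<not> a \<le> b"
  note fin = network_arcs(1)[OF assms(1)] and ne = network_arcs(2)[OF assms(1)]
    and rev = network_arcs(3)[OF assms(1)]
  obtain i j and e :: "nat \<Rightarrow> real \<Rightarrow> 'a" where "i < j" "e i 0 = e j 0" and e: "\<And>k. e k \<in> \<E>"
    and walk: "\<And>k. e k 1 = e (Suc k) 0" and opt: "\<And>k. u (e k 0) - u (e k 1) = sigma H a (rev_arc (e k))"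
    using DFE_sol_optimal_cycle[OF fin ne rev assms(3)] by metis
  have v_step: "v (e k 0) - v (e k 1) \<le> sigma H b (rev_arc (e k))" for k
  proof -
    have "v (rev_arc (e k) 1) - v (rev_arc (e k) 0) \<le> sigma H b (rev_arc (e k))"
      using assms(5) rev[OF e] unfolding DFE_subsol_def by blast
    then show ?thesis
      by simp
  qed
  have "0 = (\<Sum>k=i..<j. v (e k 0) - v (e k 1))"
    using sum_increments_along_cycle[OF walk \<open>e i 0 = e j 0\<close>] \<open>i < j\<close> by simp
  also have "\<dots> \<le> (\<Sum>k=i..<j. sigma H b (rev_arc (e k)))"
    by (rule sum_mono) (rule v_step)
  also have "\<dots> < (\<Sum>k=i..<j. sigma H a (rev_arc (e k)))"
  proof (rule sum_strict_mono)
    fix k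
    have "a_arc H (rev_arc (e k)) \<le> b"
      using a_arc_le_a_zero[OF fin assms(2) rev[OF e[of k]]] assms(4) by linarith
    then show "sigma H b (rev_arc (e k)) < sigma H a (rev_arc (e k))"
      using sigma_strict_mono[OF assms(2) rev[OF e[of k]]] \<open>\<not> a \<le> b\<close> by simp
  qed (use \<open>i < j\<close> in auto)
  also have "\<dots> = (\<Sum>k=i..<j. u (e k 0) - u (e k 1))"
    by (simp add: opt)
  also have "\<dots> = 0"
    using sum_increments_along_cycle[OF walk \<open>e i 0 = e j 0\<close>] \<open>i < j\<close> by simp
  finally show False
    by simp
qed

theorem proposition6p5:
  fixes \<E> :: "(real \<Rightarrow> 'a::euclidean_space) set"
    and H :: "(real \<Rightarrow> 'a) \<Rightarrow> real \<Rightarrow> real \<Rightarrow> real"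
    and a :: real
  assumes "network \<E>"
    and "hamiltonians \<E> H"
    and "flat_condition \<E> H"
    and "a \<ge> a_zero \<E> H"
    and "\<exists>u. DFE_sol \<E> H a u"
  shows "a = critical_value \<E> H"
proof -
  obtain u where u: "DFE_sol \<E> H a u"
    using assms(5) by blast
  have "DFE_subsol \<E> H a u"
    using DFE_sol_imp_subsol[OF network_arcs(1,3)[OF assms(1)] u] .
  then have "critical_value \<E> H = a"
    unfolding critical_value_def
    using assms(4) DFE_sol_level_le_subsol_level[OF assms(1,2) u] by (intro cInf_eq_minimum) auto
  then show ?thesis
    by simp
qed

end
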